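(* Let $d\ge1$, $n\ge d+2$, and let $T$ be a $d$-hypertree in $K_n^d$. Then the facet graph $G_d(T)$ is $d$-connected.
   Context: Fix a field $\mathbb F$. A $d$-simplex is a $(d+1)$-element subset of $[n]$ oriented by increasing order; $K_n^d$ is the complex of all subsets of $[n]$ of size at most $d+1$. A $d$-chain is a formal $\mathbb F$-combination of $d$-simplices with boundary $\partial\{s_1<\dots<s_{d+1}\}=\sum_i(-1)^{i-1}(\sigma\setminus\{s_i\})$ extended linearly; a $d$-cycle is a chain with $\partial Z=0$. A set of $d$-simplices is acyclic if it supports no nonzero $d$-cycle; a $d$-hypertree is a maximal acyclic set of $d$-simplices of $K_n^d$. The facet graph $G_d(T)$ has vertex set $T$, two $d$-simplices adjacent iff they share a $(d-1)$-face. A graph is $k$-connected if deleting any set of fewer than $k$ of its vertices leaves a nonempty connected graph. *)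

theory Defs
  imports Main
begin

definition simplices :: "nat \<Rightarrow> nat \<Rightarrow> nat set set" where
  "simplices n d = {\<sigma>. \<sigma> \<subseteq> {1..n} \<and> card \<sigma> = d + 1}"

text \<open>Sign of the face sigma minus {v}: (-1)^(i-1) where v is the i-th smallest element of sigma.\<close>
definition face_sign :: "nat set \<Rightarrow> nat \<Rightarrow> 'a::field" where
  "face_sign \<sigma> v = (-1) ^ card {x\<in>\<sigma>. x < v}"

text \<open>A d-chain is a function from d-simplices of K_n^d to the field (zero outside).
  Its boundary evaluated at a (d-1)-simplex tau.\<close>
definition boundary :: "nat \<Rightarrow> nat \<Rightarrow> (nat set \<Rightarrow> 'a::field) \<Rightarrow> nat set \<Rightarrow> 'a" where
  "boundary n d c \<tau> =
     (\<Sum>\<sigma>\<in>{\<sigma>\<in>simplices n d. \<tau> \<subset> \<sigma>}. face_sign \<sigma> (the_elem (\<sigma> - \<tau>)) * c \<sigma>)"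

definition is_cycle :: "nat \<Rightarrow> nat \<Rightarrow> (nat set \<Rightarrow> 'a::field) \<Rightarrow> bool" where
  "is_cycle n d c \<longleftrightarrow> (\<forall>\<tau>. \<tau> \<subseteq> {1..n} \<and> card \<tau> = d \<longrightarrow> boundary n d c \<tau> = 0)"

definition acyclic_set :: "'a::field itself \<Rightarrow> nat \<Rightarrow> nat \<Rightarrow> nat set set \<Rightarrow> bool" where
  "acyclic_set (_::'a itself) n d S \<longleftrightarrow> S \<subseteq> simplices n d \<and>
     \<not> (\<exists>c :: nat set \<Rightarrow> 'a. (\<forall>\<sigma>. \<sigma> \<notin> S \<longrightarrow> c \<sigma> = 0) \<and> (\<exists>\<sigma>. c \<sigma> \<noteq> 0) \<and> is_cycle n d c)"

definition hypertree :: "'a::field itself \<Rightarrow> nat \<Rightarrow> nat \<Rightarrow> nat set set \<Rightarrow> bool" where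
  "hypertree F n d T \<longleftrightarrow> acyclic_set F n d T \<and>
     (\<forall>S. T \<subset> S \<and> S \<subseteq> simplices n d \<longrightarrow> \<not> acyclic_set F n d S)"

definition facet_adj :: "nat \<Rightarrow> nat set \<Rightarrow> nat set \<Rightarrow> bool" where
  "facet_adj d \<sigma> \<tau> \<longleftrightarrow> \<sigma> \<noteq> \<tau> \<and> card (\<sigma> \<inter> \<tau>) = d"

definition graph_connected :: "'v set \<Rightarrow> ('v \<Rightarrow> 'v \<Rightarrow> bool) \<Rightarrow> bool" where
  "graph_connected W E \<longleftrightarrow>
     (\<forall>u\<in>W. \<forall>v\<in>W. (u, v) \<in> {(x, y). x \<in> W \<and> y \<in> W \<and> E x y}\<^sup>*)"

definition k_connected :: "'v set \<Rightarrow> ('v \<Rightarrow> 'v \<Rightarrow> bool) \<Rightarrow> nat \<Rightarrow> bool" where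
  "k_connected V E k \<longleftrightarrow>
     (\<forall>X. X \<subseteq> V \<and> finite X \<and> card X < k \<longrightarrow> V - X \<noteq> {} \<and> graph_connected (V - X) E)"

end

theory Submission imports Defs begin

text \<open>By duality a hypertree \<open>T\<close> is spanning: a \<open>(d-1)\<close>-cochain whose coboundary vanishes on
\<open>T\<close> is a cocycle, since every further \<open>d\<close>-simplex closes a cycle with \<open>T\<close>. Spanning passes to
links, so by double counting every vertex lies in at least \<open>d\<close> simplices of \<open>T\<close>. Induct on \<open>d\<close>.
For \<open>d = 1\<close> a spanning graph on \<open>[n]\<close> is connected, hence so is its line graph. For the step
remove fewer than \<open>d\<close> simplices \<open>X\<close>. Every remaining simplex has a vertex \<open>v\<close> lying in fewer
than \<open>d - 1\<close> members of \<open>X\<close>; by induction applied to the link of \<open>v\<close>, the remaining simplices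
through \<open>v\<close> are connected, and for two such vertices some remaining simplex contains both.\<close>

definition simplices_in :: "nat set \<Rightarrow> nat \<Rightarrow> nat set set" where
  "simplices_in V d = {\<sigma>. \<sigma> \<subseteq> V \<and> card \<sigma> = Suc d}"

definition coboundary :: "(nat set \<Rightarrow> 'a::field) \<Rightarrow> nat set \<Rightarrow> 'a" where
  "coboundary f \<sigma> = (\<Sum>v\<in>\<sigma>. face_sign \<sigma> v * f (\<sigma> - {v}))"

text \<open>Every \<open>d\<close>-simplex lies in the span of \<open>S\<close> in the simplicial matroid; stated dually through
  coboundaries, which avoids linear algebra on chains.\<close>
definition spanning :: "'a::field itself \<Rightarrow> nat set \<Rightarrow> nat \<Rightarrow> nat set set \<Rightarrow> bool" where
  "spanning F V d S \<longleftrightarrow> S \<subseteq> simplices_in V d \<and>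
     (\<forall>f::nat set \<Rightarrow> 'a. (\<forall>\<sigma>\<in>S. coboundary f \<sigma> = 0) \<longrightarrow> (\<forall>\<sigma>\<in>simplices_in V d. coboundary f \<sigma> = 0))"

lemma spanning_subset: "spanning F V d S \<Longrightarrow> S \<subseteq> simplices_in V d"
  by (simp add: spanning_def)

lemma spanning_coboundary_eq_0:
  fixes f :: "nat set \<Rightarrow> 'a::field"
  assumes "spanning TYPE('a) V d S" "\<And>\<sigma>. \<sigma> \<in> S \<Longrightarrow> coboundary f \<sigma> = 0" "\<sigma> \<in> simplices_in V d"
  shows "coboundary f \<sigma> = 0"
  using assms unfolding spanning_def by blast

lemma simplices_eq_simplices_in: "simplices n d = simplices_in {1..n} d"
  by (auto simp: simplices_def simplices_in_def)

lemma finite_simplices_in: "finite V \<Longrightarrow> finite (simplices_in V d)"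
  unfolding simplices_in_def by (rule finite_subset[of _ "Pow V"]) auto

lemma simplices_in_finite: "\<sigma> \<in> simplices_in V d \<Longrightarrow> finite \<sigma>"
  unfolding simplices_in_def by (auto intro: card_ge_0_finite)

lemma spanning_finite: "spanning F V d S \<Longrightarrow> finite V \<Longrightarrow> finite S"
  unfolding spanning_def using finite_simplices_in finite_subset by blast

section \<open>Hypertrees are spanning\<close>

lemma sum_coboundary_eq_sum_boundary:
  fixes c f :: "nat set \<Rightarrow> 'a::field"
  shows "(\<Sum>\<sigma>\<in>simplices n d. c \<sigma> * coboundary f \<sigma>) =
         (\<Sum>\<tau>\<in>{\<tau>. \<tau> \<subseteq> {1..n} \<and> card \<tau> = d}. f \<tau> * boundary n d c \<tau>)"
proof -
  let ?S = "simplices n d" and ?F = "{\<tau>. \<tau> \<subseteq> {1..n} \<and> card \<tau> = d}"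
  have fin_S: "finite ?S" and fin_F: "finite ?F"
    by (auto simp: simplices_eq_simplices_in finite_simplices_in intro: finite_subset[of _ "Pow {1..n}"])
  have fin_mem: "\<sigma> \<in> ?S \<Longrightarrow> finite \<sigma>" for \<sigma>
    by (simp add: simplices_eq_simplices_in simplices_in_finite)
  have "(\<Sum>\<sigma>\<in>?S. c \<sigma> * coboundary f \<sigma>) =
        (\<Sum>(\<sigma>,v)\<in>Sigma ?S (\<lambda>\<sigma>. \<sigma>). c \<sigma> * (face_sign \<sigma> v * f (\<sigma> - {v})))"
    unfolding coboundary_def sum_distrib_left by (rule sum.Sigma) (use fin_S fin_mem in auto)
  also have "\<dots> = (\<Sum>(\<tau>,\<sigma>)\<in>Sigma ?F (\<lambda>\<tau>. {\<sigma>\<in>?S. \<tau> \<subset> \<sigma>}).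
                    f \<tau> * (face_sign \<sigma> (the_elem (\<sigma> - \<tau>)) * c \<sigma>))"
  proof (rule sum.reindex_bij_witness[where i="\<lambda>(\<tau>,\<sigma>). (\<sigma>, the_elem (\<sigma> - \<tau>))"
                                        and j="\<lambda>(\<sigma>,v). (\<sigma> - {v}, \<sigma>)"])
    fix a assume "a \<in> Sigma ?S (\<lambda>\<sigma>. \<sigma>)"
    then obtain \<sigma> v where a: "a = (\<sigma>, v)" and \<sigma>: "\<sigma> \<in> ?S" and v: "v \<in> \<sigma>" by auto
    have "\<sigma> - (\<sigma> - {v}) = {v}" using v by auto
    then show "(case case a of (\<sigma>, v) \<Rightarrow> (\<sigma> - {v}, \<sigma>) of (\<tau>, \<sigma>) \<Rightarrow> (\<sigma>, the_elem (\<sigma> - \<tau>))) = a"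
      and "(case case a of (\<sigma>, v) \<Rightarrow> (\<sigma> - {v}, \<sigma>) of (\<tau>, \<sigma>) \<Rightarrow> f \<tau> * (face_sign \<sigma> (the_elem (\<sigma> - \<tau>)) * c \<sigma>)) =
          (case a of (\<sigma>, v) \<Rightarrow> c \<sigma> * (face_sign \<sigma> v * f (\<sigma> - {v})))"
      by (simp_all add: a)
    show "(case a of (\<sigma>, v) \<Rightarrow> (\<sigma> - {v}, \<sigma>)) \<in> Sigma ?F (\<lambda>\<tau>. {\<sigma>\<in>?S. \<tau> \<subset> \<sigma>})"
      using \<sigma> v fin_mem[OF \<sigma>] by (auto simp: a simplices_def)
  next
    fix b assume "b \<in> Sigma ?F (\<lambda>\<tau>. {\<sigma>\<in>?S. \<tau> \<subset> \<sigma>})"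
    then obtain \<tau> \<sigma> where b: "b = (\<tau>, \<sigma>)" and \<tau>: "\<tau> \<in> ?F" and \<sigma>: "\<sigma> \<in> ?S" and "\<tau> \<subset> \<sigma>"
      by auto
    moreover have "card (\<sigma> - \<tau>) = 1"
      using \<tau> \<sigma> \<open>\<tau> \<subset> \<sigma>\<close> fin_mem[OF \<sigma>]
      by (subst card_Diff_subset) (auto simp: simplices_def dest: finite_subset)
    then obtain u where "\<sigma> - \<tau> = {u}" by (auto simp: card_Suc_eq)
    ultimately show "(case case b of (\<tau>, \<sigma>) \<Rightarrow> (\<sigma>, the_elem (\<sigma> - \<tau>)) of (\<sigma>, v) \<Rightarrow> (\<sigma> - {v}, \<sigma>)) = b"
      and "(case b of (\<tau>, \<sigma>) \<Rightarrow> (\<sigma>, the_elem (\<sigma> - \<tau>))) \<in> Sigma ?S (\<lambda>\<sigma>. \<sigma>)"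
      by auto
  qed
  also have "\<dots> = (\<Sum>\<tau>\<in>?F. \<Sum>\<sigma>\<in>{\<sigma>\<in>?S. \<tau> \<subset> \<sigma>}. f \<tau> * (face_sign \<sigma> (the_elem (\<sigma> - \<tau>)) * c \<sigma>))"
    by (rule sum.Sigma[symmetric]) (use fin_F fin_S in auto)
  also have "\<dots> = (\<Sum>\<tau>\<in>?F. f \<tau> * boundary n d c \<tau>)"
    unfolding boundary_def by (simp add: sum_distrib_left)
  finally show ?thesis .
qed

lemma hypertree_spanning:
  assumes H: "hypertree TYPE('a::field) n d T"
  shows "spanning TYPE('a) {1..n} d T"
  unfolding spanning_def simplices_eq_simplices_in[symmetric]
proof (intro conjI allI impI ballI)
  show T_sub: "T \<subseteq> simplices n d" using H by (auto simp: hypertree_def acyclic_set_def)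
  fix f :: "nat set \<Rightarrow> 'a" and \<sigma>0 assume f_T: "\<forall>\<sigma>\<in>T. coboundary f \<sigma> = 0" and \<sigma>0: "\<sigma>0 \<in> simplices n d"
  show "coboundary f \<sigma>0 = 0"
  proof (cases "\<sigma>0 \<in> T")
    case False
    then have "T \<subset> insert \<sigma>0 T" and sub: "insert \<sigma>0 T \<subseteq> simplices n d" using \<sigma>0 T_sub by auto
    then have "\<not> acyclic_set TYPE('a) n d (insert \<sigma>0 T)" using H unfolding hypertree_def by blast
    then obtain c :: "nat set \<Rightarrow> 'a" where c_supp: "\<forall>\<sigma>. \<sigma> \<notin> insert \<sigma>0 T \<longrightarrow> c \<sigma> = 0"
      and c_nz: "\<exists>\<sigma>. c \<sigma> \<noteq> 0" and c_cycle: "is_cycle n d c"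
      using sub unfolding acyclic_set_def by blast
    have "c \<sigma>0 \<noteq> 0"
    proof
      assume "c \<sigma>0 = 0"
      then have "\<forall>\<sigma>. \<sigma> \<notin> T \<longrightarrow> c \<sigma> = 0" using c_supp by auto
      then show False using H c_nz c_cycle unfolding hypertree_def acyclic_set_def by blast
    qed
    have "0 = (\<Sum>\<sigma>\<in>simplices n d. c \<sigma> * coboundary f \<sigma>)"
      unfolding sum_coboundary_eq_sum_boundary using c_cycle
      by (auto simp: is_cycle_def intro!: sum.neutral[symmetric])
    also have "\<dots> = c \<sigma>0 * coboundary f \<sigma>0"
      using c_supp f_T \<sigma>0
      by (subst sum.remove[of _ \<sigma>0]) (auto simp: simplices_eq_simplices_in finite_simplices_in
                                        intro!: sum.neutral)
    finally show ?thesis using \<open>c \<sigma>0 \<noteq> 0\<close> by simp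
  qed (use f_T in blast)
qed

section \<open>Links\<close>

definition link :: "nat \<Rightarrow> nat set set \<Rightarrow> nat set set" where
  "link v S = (\<lambda>\<sigma>. \<sigma> - {v}) ` {\<sigma>\<in>S. v \<in> \<sigma>}"

text \<open>The sign makes the coboundary commute with the cone up to a global sign.\<close>
definition cone :: "nat \<Rightarrow> (nat set \<Rightarrow> 'a::field) \<Rightarrow> nat set \<Rightarrow> 'a" where
  "cone v f \<tau> = (if v \<in> \<tau> then (-1) ^ card {x\<in>\<tau>. x < v} * f (\<tau> - {v}) else 0)"

lemma card_link: "card (link v S) = card {\<sigma>\<in>S. v \<in> \<sigma>}"
  unfolding link_def by (rule card_image) (auto simp: inj_on_def)

lemma card_less_insert:
  assumes "finite A" "v \<notin> A"
  shows "card {x\<in>insert v A. x < u} = card {x\<in>A. x < u} + (if v < u then 1 else 0)"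
proof -
  have "{x\<in>insert v A. x < u} = (if v < u then insert v {x\<in>A. x < u} else {x\<in>A. x < u})" by auto
  then show ?thesis using assms by auto
qed

lemma coboundary_cone_insert:
  fixes f :: "nat set \<Rightarrow> 'a::field"
  assumes fin: "finite \<sigma>" and v: "v \<notin> \<sigma>"
  shows "coboundary (cone v f) (insert v \<sigma>) = - ((-1) ^ card {x\<in>\<sigma>. x < v}) * coboundary f \<sigma>"
proof -
  have face_term: "face_sign (insert v \<sigma>) u * cone v f (insert v \<sigma> - {u}) =
              - ((-1) ^ card {x\<in>\<sigma>. x < v}) * (face_sign \<sigma> u * f (\<sigma> - {u}))" if u: "u \<in> \<sigma>" for u
  proof -
    have uv: "u \<noteq> v" using u v by auto
    have e1: "insert v \<sigma> - {u} = insert v (\<sigma> - {u})" and e2: "insert v (\<sigma> - {u}) - {v} = \<sigma> - {u}"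
      using uv v by auto
    have c1: "card {x\<in>insert v (\<sigma> - {u}). x < v} = card {x\<in>\<sigma> - {u}. x < v}"
      using card_less_insert[of "\<sigma> - {u}" v v] fin v by auto
    have c2: "card {x\<in>\<sigma>. x < v} = card {x\<in>\<sigma> - {u}. x < v} + (if u < v then 1 else 0)"
      using card_less_insert[of "\<sigma> - {u}" u v] fin u by (simp add: insert_absorb)
    have c3: "card {x\<in>insert v \<sigma>. x < u} = card {x\<in>\<sigma>. x < u} + (if v < u then 1 else 0)"
      using card_less_insert[of \<sigma> v u] fin v by auto
    show ?thesis
      unfolding face_sign_def cone_def e1 e2 c1 c2 c3 using uv
      by (cases "u < v") (auto simp: power_add)
  qed
  have "coboundary (cone v f) (insert v \<sigma>) =
        (\<Sum>u\<in>\<sigma>. face_sign (insert v \<sigma>) u * cone v f (insert v \<sigma> - {u}))"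
    unfolding coboundary_def using fin v by (simp add: cone_def)
  also have "\<dots> = - ((-1) ^ card {x\<in>\<sigma>. x < v}) * coboundary f \<sigma>"
    unfolding coboundary_def sum_distrib_left by (rule sum.cong) (simp_all add: face_term)
  finally show ?thesis .
qed

lemma coboundary_cone_notin: "v \<notin> \<sigma> \<Longrightarrow> coboundary (cone v f) \<sigma> = 0"
  unfolding coboundary_def cone_def by (auto intro!: sum.neutral)

lemma spanning_link:
  assumes sp: "spanning TYPE('a::field) V (Suc k) S" and v: "v \<in> V"
  shows "spanning TYPE('a) (V - {v}) k (link v S)"
  unfolding spanning_def
proof (intro conjI allI impI ballI)
  have S_sub: "S \<subseteq> simplices_in V (Suc k)" using sp by (rule spanning_subset)
  then show "link v S \<subseteq> simplices_in (V - {v}) k"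
    by (auto simp: link_def simplices_in_def dest!: card_ge_0_finite)
  fix f :: "nat set \<Rightarrow> 'a" and \<tau>
  assume f_link: "\<forall>\<tau>\<in>link v S. coboundary f \<tau> = 0" and \<tau>: "\<tau> \<in> simplices_in (V - {v}) k"
  have cone_S: "coboundary (cone v f) \<sigma> = 0" if \<sigma>: "\<sigma> \<in> S" for \<sigma>
  proof (cases "v \<in> \<sigma>")
    case True
    then have "coboundary f (\<sigma> - {v}) = 0" and "\<sigma> = insert v (\<sigma> - {v})"
      using f_link \<sigma> by (auto simp: link_def)
    then show ?thesis
      using coboundary_cone_insert[of "\<sigma> - {v}" v f] S_sub \<sigma> simplices_in_finite by auto
  qed (simp add: coboundary_cone_notin)
  have "insert v \<tau> \<in> simplices_in V (Suc k)" and fin: "finite \<tau>" and "v \<notin> \<tau>"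
    using \<tau> v simplices_in_finite[OF \<tau>] by (auto simp: simplices_in_def card_insert_if)
  then have "coboundary (cone v f) (insert v \<tau>) = 0" using spanning_coboundary_eq_0[OF sp cone_S] by blast
  then show "coboundary f \<tau> = 0" using coboundary_cone_insert[OF fin \<open>v \<notin> \<tau>\<close>, of f] by simp
qed

section \<open>Counting\<close>

lemma sum_degrees_eq_sum_card:
  assumes "finite V" "finite S" "\<forall>\<sigma>\<in>S. \<sigma> \<subseteq> V"
  shows "(\<Sum>w\<in>V. card {\<sigma>\<in>S. w \<in> \<sigma>}) = (\<Sum>\<sigma>\<in>S. card \<sigma>)"
proof -
  have "(\<Sum>w\<in>V. card {\<sigma>\<in>S. w \<in> \<sigma>}) = (\<Sum>w\<in>V. \<Sum>\<sigma>\<in>S. if w \<in> \<sigma> then 1 else 0)"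
    using assms(2) by (simp add: sum.If_cases Int_def)
  also have "\<dots> = (\<Sum>\<sigma>\<in>S. \<Sum>w\<in>V. if w \<in> \<sigma> then 1 else 0)" by (rule sum.swap)
  also have "\<dots> = (\<Sum>\<sigma>\<in>S. card \<sigma>)"
    using assms by (intro sum.cong) (auto simp: sum.If_cases Int_absorb1 Int_def[symmetric])
  finally show ?thesis .
qed

lemma spanning_card_ge:
  assumes "spanning TYPE('a::field) V k S" "finite V" "card V \<ge> k + 2"
  shows "card S \<ge> k + 1"
  using assms
proof (induction k arbitrary: V S)
  case 0
  then obtain v where v: "v \<in> V" by fastforce
  have "S \<noteq> {}"
  proof
    assume "S = {}"
    moreover have "{v} \<in> simplices_in V 0" using v by (simp add: simplices_in_def)
    ultimately have "coboundary (\<lambda>_. 1::'a) {v} = 0"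
      using spanning_coboundary_eq_0[OF "0.prems"(1), of "\<lambda>_. 1"] by simp
    then show False by (simp add: coboundary_def face_sign_def)
  qed
  then show ?case using spanning_finite[OF "0.prems"(1,2)] by (simp add: Suc_le_eq card_gt_0_iff)
next
  case (Suc k)
  have S_sub: "S \<subseteq> simplices_in V (Suc k)" using Suc.prems(1) by (rule spanning_subset)
  have degree: "k + 1 \<le> card {\<sigma>\<in>S. w \<in> \<sigma>}" if w: "w \<in> V" for w
    using Suc.IH[OF spanning_link[OF Suc.prems(1) w]] Suc.prems w by (simp add: card_link)
  have "card V * (k + 1) \<le> (\<Sum>w\<in>V. card {\<sigma>\<in>S. w \<in> \<sigma>})"
    using sum_mono[of V "\<lambda>_. k + 1", OF degree] by simp
  also have "\<dots> = (\<Sum>\<sigma>\<in>S. card \<sigma>)"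
    using S_sub spanning_finite[OF Suc.prems(1,2)] Suc.prems(2)
    by (intro sum_degrees_eq_sum_card) (auto simp: simplices_in_def)
  also have "\<dots> = card S * (k + 2)"
    using S_sub by (simp add: simplices_in_def subset_iff)
  finally have "card V * (k + 1) \<le> card S * (k + 2)" .
  moreover have "(k + 3) * (k + 1) \<le> card V * (k + 1)"
    using Suc.prems(3) by (intro mult_right_mono) auto
  ultimately have "(k + 1) * (k + 2) < card S * (k + 2)" by (simp add: algebra_simps)
  then show ?case by (simp only: mult_less_cancel2) simp
qed

lemma spanning_vertex_degree_ge:
  assumes "spanning TYPE('a::field) V (Suc k) S" "finite V" "card V \<ge> k + 3" "w \<in> V"
  shows "card {\<sigma>\<in>S. w \<in> \<sigma>} \<ge> k + 1"
  using spanning_card_ge[OF spanning_link[OF assms(1,4)]] assms(2-4) by (simp add: card_link)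

lemma spanning_through_vertex_avoiding:
  assumes "spanning TYPE('a::field) V (Suc k) S" "finite V" "card V \<ge> k + 3"
    and "X \<subseteq> S" "card X \<le> k" "w \<in> V"
  shows "\<exists>\<sigma>\<in>S - X. w \<in> \<sigma>"
proof (rule ccontr)
  assume "\<not> ?thesis"
  then have "{\<sigma>\<in>S. w \<in> \<sigma>} \<subseteq> X" by auto
  moreover have "finite X" using assms(4) spanning_finite[OF assms(1,2)] finite_subset by blast
  ultimately have "card {\<sigma>\<in>S. w \<in> \<sigma>} \<le> k" using assms(5) card_mono order_trans by blast
  then show False using spanning_vertex_degree_ge[OF assms(1-3,6)] by simp
qed

lemma simplex_has_vertex_in_few_members:
  assumes "X \<subseteq> simplices_in V d" "\<sigma> \<in> simplices_in V d" "\<sigma> \<notin> X" "finite X"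
    and "card X \<le> m" "0 < m"
  shows "\<exists>v\<in>\<sigma>. v \<in> V \<and> card {x\<in>X. v \<in> x} < m"
proof -
  have \<sigma>: "\<sigma> \<subseteq> V" "card \<sigma> = Suc d" using assms(2) by (auto simp: simplices_in_def)
  show ?thesis
  proof (cases "X = {}")
    case True
    then show ?thesis using \<sigma> assms(6) by (auto simp: card_Suc_eq)
  next
    case False
    then obtain x0 where x0: "x0 \<in> X" by blast
    have x0_simplex: "x0 \<in> simplices_in V d" using x0 assms(1) by blast
    have "\<not> \<sigma> \<subseteq> x0"
    proof
      assume "\<sigma> \<subseteq> x0"
      moreover have "card x0 = card \<sigma>" using x0_simplex \<sigma>(2) by (simp add: simplices_in_def)
      ultimately have "\<sigma> = x0" using card_seteq[OF simplices_in_finite[OF x0_simplex]] by simp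
      with x0 assms(3) show False by simp
    qed
    then obtain v where v: "v \<in> \<sigma>" "v \<notin> x0" by blast
    then have "{x\<in>X. v \<in> x} \<subset> X" using x0 by blast
    then have "card {x\<in>X. v \<in> x} < card X" by (rule psubset_card_mono[OF assms(4)])
    with v \<sigma>(1) assms(5) show ?thesis by (intro bexI[of _ v]) auto
  qed
qed

section \<open>Facet graphs\<close>

definition induced_edges :: "'v set \<Rightarrow> ('v \<Rightarrow> 'v \<Rightarrow> bool) \<Rightarrow> ('v \<times> 'v) set" where
  "induced_edges W E = {(x, y). x \<in> W \<and> y \<in> W \<and> E x y}"

lemma graph_connected_iff_rtrancl:
  "graph_connected W E \<longleftrightarrow> (\<forall>u\<in>W. \<forall>v\<in>W. (u, v) \<in> (induced_edges W E)\<^sup>*)"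
  unfolding graph_connected_def induced_edges_def by simp

lemma facet_adjI:
  assumes "card \<sigma> = Suc d" "card \<sigma>' = Suc d" "\<sigma> \<noteq> \<sigma>'" "d \<le> card (\<sigma> \<inter> \<sigma>')"
  shows "facet_adj d \<sigma> \<sigma>'"
proof -
  have fin: "finite \<sigma>" "finite \<sigma>'" using assms(1,2) card.infinite by force+
  have "card (\<sigma> \<inter> \<sigma>') \<noteq> Suc d"
  proof
    assume "card (\<sigma> \<inter> \<sigma>') = Suc d"
    then have "\<sigma> \<inter> \<sigma>' = \<sigma>" "\<sigma> \<inter> \<sigma>' = \<sigma>'"
      using assms(1,2) fin by (metis Int_lower1 Int_lower2 card_subset_eq)+
    with assms(3) show False by simp
  qed
  moreover have "card (\<sigma> \<inter> \<sigma>') \<le> Suc d" using assms(1) fin card_mono[of \<sigma>] by auto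
  ultimately show ?thesis using assms(3,4) by (simp add: facet_adj_def)
qed

lemma coboundary_edge:
  fixes f :: "nat set \<Rightarrow> 'a::field"
  assumes "a \<noteq> b"
  shows "coboundary f {a, b} = (if a < b then f {b} - f {a} else f {a} - f {b})"
proof -
  have "{x\<in>{a,b}. x < a} = (if b < a then {b} else {})" "{x\<in>{a,b}. x < b} = (if a < b then {a} else {})"
    by auto
  then have "face_sign {a,b} a = (if b < a then -1 else (1::'a))"
    and "face_sign {a,b} b = (if a < b then -1 else (1::'a))"
    unfolding face_sign_def by simp_all
  moreover have "{a,b} - {a} = {b}" "{a,b} - {b} = {a}" using assms by auto
  ultimately show ?thesis using assms by (simp add: coboundary_def)
qed

lemma simplices_in_1E:
  assumes "\<tau> \<in> simplices_in V 1"
  obtains a b where "\<tau> = {a, b}" "a \<noteq> b" "a \<in> V" "b \<in> V"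
  using assms by (auto simp: simplices_in_def card_Suc_eq numeral_2_eq_2)

text \<open>The coboundary of the indicator of \<open>C\<close> vanishes on \<open>S\<close>, hence on every edge.\<close>
lemma spanning_1_closed_vertices:
  assumes sp: "spanning TYPE('a::field) V 1 S"
    and closed: "\<And>\<tau> a b. \<tau> \<in> S \<Longrightarrow> a \<in> \<tau> \<Longrightarrow> b \<in> \<tau> \<Longrightarrow> a \<in> C \<Longrightarrow> b \<in> C"
    and a0: "a0 \<in> V" "a0 \<in> C"
  shows "V \<subseteq> C"
proof
  define f :: "nat set \<Rightarrow> 'a" where "f \<tau> = (if \<tau> \<subseteq> C then 1 else 0)" for \<tau>
  have cocycle_S: "coboundary f \<tau> = 0" if "\<tau> \<in> S" for \<tau>
  proof -
    have "\<tau> \<in> simplices_in V 1" using \<open>\<tau> \<in> S\<close> spanning_subset[OF sp] by blast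
    then obtain a b where "\<tau> = {a, b}" "a \<noteq> b" "a \<in> V" "b \<in> V" by (rule simplices_in_1E)
    moreover have "a \<in> C \<longleftrightarrow> b \<in> C" using closed[OF \<open>\<tau> \<in> S\<close>] \<open>\<tau> = {a, b}\<close> by blast
    then have "f {a} = f {b}" by (simp add: f_def)
    ultimately show ?thesis by (simp add: coboundary_edge)
  qed
  have cocycle: "coboundary f \<tau> = 0" if "\<tau> \<in> simplices_in V 1" for \<tau>
    by (rule spanning_coboundary_eq_0[OF sp cocycle_S that])
  fix u assume "u \<in> V"
  show "u \<in> C"
  proof (cases "u = a0")
    case False
    then have "{a0, u} \<in> simplices_in V 1"
      using \<open>u \<in> V\<close> a0 by (simp add: simplices_in_def)
    then have "coboundary f {a0, u} = 0" by (rule cocycle)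
    then have "f {a0} = f {u}" using False by (simp add: coboundary_edge split: if_splits)
    then show ?thesis using a0 by (simp add: f_def split: if_splits)
  qed (use a0 in simp)
qed

lemma spanning_1_facet_graph_connected:
  assumes sp: "spanning TYPE('a::field) V 1 S"
  shows "graph_connected S (facet_adj 1)"
  unfolding graph_connected_iff_rtrancl
proof (intro ballI)
  let ?r = "induced_edges S (facet_adj 1)"
  have S_sub: "S \<subseteq> simplices_in V 1" using sp by (rule spanning_subset)
  fix \<sigma>0 \<sigma> assume \<sigma>0: "\<sigma>0 \<in> S" and \<sigma>: "\<sigma> \<in> S"
  define C where "C = {u. \<exists>\<sigma>'\<in>S. u \<in> \<sigma>' \<and> (\<sigma>0, \<sigma>') \<in> ?r\<^sup>*}"
  have reach: "(\<sigma>0, \<sigma>'') \<in> ?r\<^sup>*" if "u \<in> C" "\<sigma>'' \<in> S" "u \<in> \<sigma>''" for u \<sigma>''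
  proof -
    obtain \<sigma>' where \<sigma>': "\<sigma>' \<in> S" "u \<in> \<sigma>'" "(\<sigma>0, \<sigma>') \<in> ?r\<^sup>*" using \<open>u \<in> C\<close> C_def by blast
    show ?thesis
    proof (cases "\<sigma>' = \<sigma>''")
      case False
      have card: "card \<sigma>' = Suc 1" "card \<sigma>'' = Suc 1"
        using \<sigma>'(1) \<open>\<sigma>'' \<in> S\<close> S_sub by (auto simp: simplices_in_def)
      then have "0 < card (\<sigma>' \<inter> \<sigma>'')"
        using \<sigma>'(2) \<open>u \<in> \<sigma>''\<close> card.infinite by (fastforce simp: card_gt_0_iff)
      then have "facet_adj 1 \<sigma>' \<sigma>''" using card False by (intro facet_adjI) simp_all
      then have "(\<sigma>', \<sigma>'') \<in> ?r" using \<sigma>'(1) \<open>\<sigma>'' \<in> S\<close> by (simp add: induced_edges_def)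
      with \<sigma>'(3) show ?thesis by (rule rtrancl_into_rtrancl)
    qed (use \<sigma>' in simp)
  qed
  have closed: "b \<in> C" if "\<tau> \<in> S" "a \<in> \<tau>" "b \<in> \<tau>" "a \<in> C" for \<tau> a b
    using reach[OF \<open>a \<in> C\<close> \<open>\<tau> \<in> S\<close> \<open>a \<in> \<tau>\<close>] that unfolding C_def by blast
  have "\<sigma>0 \<in> simplices_in V 1" using \<sigma>0 S_sub by blast
  then obtain a0 b0 where a0: "\<sigma>0 = {a0, b0}" "a0 \<noteq> b0" "a0 \<in> V" "b0 \<in> V"
    by (rule simplices_in_1E)
  have "a0 \<in> C" using \<sigma>0 a0(1) C_def by blast
  with sp closed a0(3) have V_sub: "V \<subseteq> C" by (rule spanning_1_closed_vertices)
  have "\<sigma> \<in> simplices_in V 1" using \<sigma> S_sub by blast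
  then obtain a b where "\<sigma> = {a, b}" "a \<noteq> b" "a \<in> V" "b \<in> V" by (rule simplices_in_1E)
  then show "(\<sigma>0, \<sigma>) \<in> ?r\<^sup>*" using reach[of a \<sigma>] V_sub \<sigma> by blast
qed

lemma graph_connected_if_stars_connected:
  fixes W :: "'a set set"
  assumes cover: "\<And>\<sigma>. \<sigma> \<in> W \<Longrightarrow> \<exists>v\<in>\<sigma>. P v"
    and star: "\<And>v \<sigma> \<sigma>'. P v \<Longrightarrow> \<sigma> \<in> W \<Longrightarrow> \<sigma>' \<in> W \<Longrightarrow> v \<in> \<sigma> \<Longrightarrow> v \<in> \<sigma>' \<Longrightarrow>
                      (\<sigma>, \<sigma>') \<in> (induced_edges W E)\<^sup>*"
    and meet: "\<And>v w. P v \<Longrightarrow> P w \<Longrightarrow> v \<noteq> w \<Longrightarrow> \<exists>\<sigma>\<in>W. v \<in> \<sigma> \<and> w \<in> \<sigma>"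
  shows "graph_connected W E"
  unfolding graph_connected_iff_rtrancl
proof (intro ballI)
  fix \<sigma>1 \<sigma>2 assume \<sigma>1: "\<sigma>1 \<in> W" and \<sigma>2: "\<sigma>2 \<in> W"
  obtain v1 v2 where v1: "v1 \<in> \<sigma>1" "P v1" and v2: "v2 \<in> \<sigma>2" "P v2" using cover \<sigma>1 \<sigma>2 by meson
  show "(\<sigma>1, \<sigma>2) \<in> (induced_edges W E)\<^sup>*"
  proof (cases "v1 = v2")
    case True
    then show ?thesis using star \<sigma>1 \<sigma>2 v1 v2 by blast
  next
    case False
    then obtain \<sigma> where "\<sigma> \<in> W" "v1 \<in> \<sigma>" "v2 \<in> \<sigma>" using meet v1 v2 by blast
    then have "(\<sigma>1, \<sigma>) \<in> (induced_edges W E)\<^sup>*" and "(\<sigma>, \<sigma>2) \<in> (induced_edges W E)\<^sup>*"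
      using star \<sigma>1 \<sigma>2 v1 v2 by blast+
    then show ?thesis by (rule rtrancl_trans)
  qed
qed

lemma rtrancl_induced_edges_insert:
  assumes "(\<tau>1, \<tau>2) \<in> (induced_edges W (facet_adj m))\<^sup>*"
    and W: "\<And>\<tau>. \<tau> \<in> W \<Longrightarrow> insert v \<tau> \<in> R \<and> v \<notin> \<tau> \<and> finite \<tau>"
  shows "(insert v \<tau>1, insert v \<tau>2) \<in> (induced_edges R (facet_adj (Suc m)))\<^sup>*"
  using assms(1)
proof (induction rule: rtrancl_induct)
  case (step y z)
  then have y: "y \<in> W" and z: "z \<in> W" and adj: "facet_adj m y z"
    by (auto simp: induced_edges_def)
  have "insert v y \<noteq> insert v z"
    using adj W[OF y] W[OF z] by (metis Diff_insert_absorb facet_adj_def)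
  moreover have "card (insert v y \<inter> insert v z) = Suc m"
    using adj W[OF y] by (simp add: facet_adj_def)
  ultimately have "(insert v y, insert v z) \<in> induced_edges R (facet_adj (Suc m))"
    using W[OF y] W[OF z] by (simp add: induced_edges_def facet_adj_def)
  with step.IH show ?case by (rule rtrancl_into_rtrancl)
qed simp

text \<open>Removing \<open>X\<close> from \<open>S\<close> removes exactly \<open>link v X\<close> from the link, so connectivity of the
  reduced link carries over to the simplices of \<open>S - X\<close> through \<open>v\<close>.\<close>
lemma star_connected_if_link_connected:
  assumes conn: "graph_connected (link v S - link v X) (facet_adj m)" and fin: "\<forall>\<sigma>\<in>S. finite \<sigma>"
    and \<sigma>1: "\<sigma>1 \<in> S - X" "v \<in> \<sigma>1" and \<sigma>2: "\<sigma>2 \<in> S - X" "v \<in> \<sigma>2"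
  shows "(\<sigma>1, \<sigma>2) \<in> (induced_edges (S - X) (facet_adj (Suc m)))\<^sup>*"
proof -
  let ?L = "link v S - link v X"
  have cone: "insert v \<tau> \<in> S - X \<and> v \<notin> \<tau> \<and> finite \<tau>" if "\<tau> \<in> ?L" for \<tau>
    using that fin by (auto simp: link_def insert_absorb)
  have in_link: "\<sigma> - {v} \<in> ?L" if "\<sigma> \<in> S - X" "v \<in> \<sigma>" for \<sigma>
  proof -
    have "\<sigma> - {v} \<noteq> x - {v}" if "x \<in> X" "v \<in> x" for x
      using that \<open>\<sigma> \<in> S - X\<close> \<open>v \<in> \<sigma>\<close> by (metis DiffD2 insert_Diff)
    then show ?thesis using that by (auto simp: link_def)
  qed
  have "(\<sigma>1 - {v}, \<sigma>2 - {v}) \<in> (induced_edges ?L (facet_adj m))\<^sup>*"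
    using conn in_link[OF \<sigma>1] in_link[OF \<sigma>2] unfolding graph_connected_iff_rtrancl by blast
  from rtrancl_induced_edges_insert[OF this cone] show ?thesis
    using \<sigma>1(2) \<sigma>2(2) by (simp add: insert_absorb)
qed

lemma spanning_through_two_vertices_avoiding:
  assumes sp: "spanning TYPE('a::field) V (Suc (Suc k)) S" and "finite V" "card V \<ge> k + 4"
    and "X \<subseteq> S" "card {x\<in>X. v \<in> x} \<le> k" "v \<in> V" "w \<in> V" "w \<noteq> v"
  shows "\<exists>\<sigma>\<in>S - X. v \<in> \<sigma> \<and> w \<in> \<sigma>"
proof -
  have "link v X \<subseteq> link v S" using \<open>X \<subseteq> S\<close> by (auto simp: link_def)
  then have "\<exists>\<tau>\<in>link v S - link v X. w \<in> \<tau>"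
    using assms by (intro spanning_through_vertex_avoiding[OF spanning_link[OF sp]]) (auto simp: card_link)
  then show ?thesis using spanning_subset[OF sp] by (force simp: link_def simplices_in_def)
qed

section \<open>Connectivity\<close>

lemma spanning_minus_small_connected:
  assumes "spanning TYPE('a::field) V d S" "finite V" "card V \<ge> d + 2" "X \<subseteq> S" "card X < d"
  shows "S - X \<noteq> {} \<and> graph_connected (S - X) (facet_adj d)"
  using assms
proof (induction d arbitrary: V S X)
  case (Suc m)
  note sp = Suc.prems(1) and fin_V = Suc.prems(2) and card_V = Suc.prems(3)
  have fin_X: "finite X"
    using Suc.prems(4) spanning_finite[OF sp fin_V] finite_subset by blast
  have "card X < card S" using spanning_card_ge[OF sp fin_V card_V] Suc.prems(5) by simp
  then have "S - X \<noteq> {}" using fin_X by (metis Diff_eq_empty_iff card_mono leD)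
  moreover have "graph_connected (S - X) (facet_adj (Suc m))"
  proof (cases "m = 0")
    case True
    then have "X = {}" using Suc.prems(5) fin_X by simp
    with True show ?thesis using spanning_1_facet_graph_connected[of V S] sp by simp
  next
    case False
    then obtain k where m: "m = Suc k" using not0_implies_Suc by blast
    have S_sub: "S \<subseteq> simplices_in V (Suc m)" using sp by (rule spanning_subset)
    show ?thesis
    proof (rule graph_connected_if_stars_connected[where P = "\<lambda>v. v \<in> V \<and> card {x\<in>X. v \<in> x} < m"])
      fix \<sigma> assume "\<sigma> \<in> S - X"
      then have "X \<subseteq> simplices_in V (Suc m)" "\<sigma> \<in> simplices_in V (Suc m)" "\<sigma> \<notin> X"
        using S_sub Suc.prems(4) by auto
      then show "\<exists>v\<in>\<sigma>. v \<in> V \<and> card {x\<in>X. v \<in> x} < m"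
        by (rule simplex_has_vertex_in_few_members[OF _ _ _ fin_X]) (use Suc.prems(5) m in auto)
    next
      fix v \<sigma> \<sigma>' assume v: "v \<in> V \<and> card {x\<in>X. v \<in> x} < m"
        and \<sigma>: "\<sigma> \<in> S - X" "\<sigma>' \<in> S - X" "v \<in> \<sigma>" "v \<in> \<sigma>'"
      have "link v X \<subseteq> link v S" using Suc.prems(4) by (auto simp: link_def)
      then have "graph_connected (link v S - link v X) (facet_adj m)"
        using Suc.IH[OF spanning_link[OF sp]] v fin_V card_V by (simp add: card_link)
      then show "(\<sigma>, \<sigma>') \<in> (induced_edges (S - X) (facet_adj (Suc m)))\<^sup>*"
        using star_connected_if_link_connected S_sub simplices_in_finite \<sigma> by blast
    next
      fix v w assume "v \<in> V \<and> card {x\<in>X. v \<in> x} < m" "w \<in> V \<and> card {x\<in>X. w \<in> x} < m" "v \<noteq> w"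
      then show "\<exists>\<sigma>\<in>S - X. v \<in> \<sigma> \<and> w \<in> \<sigma>"
        using spanning_through_two_vertices_avoiding[OF sp[unfolded m] fin_V] card_V Suc.prems(4) m by auto
    qed
  qed
  ultimately show ?case ..
qed simp

theorem theorem4p4:
  fixes d n :: nat and T :: "nat set set"
  assumes "d \<ge> 1" and "n \<ge> d + 2"
    and "hypertree TYPE('a::field) n d T"
  shows "k_connected T (facet_adj d) d"
  unfolding k_connected_def
proof (intro allI impI)
  fix X assume "X \<subseteq> T \<and> finite X \<and> card X < d"
  then show "T - X \<noteq> {} \<and> graph_connected (T - X) (facet_adj d)"
    by (intro spanning_minus_small_connected[OF hypertree_spanning[OF assms(3)]]) (use assms(2) in auto)
qed

end
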